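(* Let $W_1,\dots,W_m\in\mathbb{R}^{n\times n}$ be eventually doubly stochastic signed adjacency matrices, let $Q\in\mathbb{R}^{(n-1)\times n}$ satisfy $QQ^\top=I_{n-1}$, $Q\mathbf{1}=0$, fix an integer $r\ge1$, and set $\hat W_k=W_k\otimes\cdots\otimes W_k$ and $\hat Q=Q\otimes\cdots\otimes Q$ ($r$-fold Kronecker products). If there exists a symmetric positive definite $\hat P\in\mathbb{R}^{n^r\times n^r}$ such that \[ \hat Q\hat W_k^\top\hat P\hat W_k\hat Q^\top-\hat Q\hat P\hat Q^\top\prec0\quad\text{for all }k=1,\dots,m, \] then $\{W_1,\dots,W_m\}$ is a consensus set for the switched system $\mathbf{x}(t+1)=W_{\sigma(t)}\mathbf{x}(t)$.
   Context: $W_k$ are real matrices (entries of any sign). $W$ is eventually positive if there is $t_0\in\mathbb{Z}_{\ge0}$ with $W^t$ entrywise positive for all integers $t\ge t_0$; eventually doubly stochastic means eventually positive with $W\mathbf{1}=W^\top\mathbf{1}=\mathbf{1}$. $X\prec0$ means symmetric negative definite. A switching signal is any map $\sigma:\mathbb{Z}_{\ge0}\to\{1,\dots,m\}$; a consensus set is one for which, for every switching signal and every $\mathbf{x}(0)$, $\mathbf{x}(t)\to\alpha\mathbf{1}$ for some $\alpha\in\mathbb{R}$. *)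

theory Defs
  imports "Jordan_Normal_Form.Matrix"
begin

definition ones_vec :: "nat \<Rightarrow> real vec" where
  "ones_vec n = vec n (\<lambda>_. 1)"

definition kron :: "real mat \<Rightarrow> real mat \<Rightarrow> real mat" where
  "kron A B = mat (dim_row A * dim_row B) (dim_col A * dim_col B)
     (\<lambda>(i,j). A $$ (i div dim_row B, j div dim_col B) * B $$ (i mod dim_row B, j mod dim_col B))"

fun kron_pow :: "real mat \<Rightarrow> nat \<Rightarrow> real mat" where
  "kron_pow A 0 = 1\<^sub>m 1"
| "kron_pow A (Suc r) = kron (kron_pow A r) A"

definition eventually_positive :: "nat \<Rightarrow> real mat \<Rightarrow> bool" where
  "eventually_positive n W \<longleftrightarrow> W \<in> carrier_mat n n \<and>
     (\<exists>t0. \<forall>t\<ge>t0. \<forall>i<n. \<forall>j<n. (W ^\<^sub>m t) $$ (i,j) > 0)"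

definition eventually_doubly_stochastic :: "nat \<Rightarrow> real mat \<Rightarrow> bool" where
  "eventually_doubly_stochastic n W \<longleftrightarrow> eventually_positive n W \<and>
     W *\<^sub>v ones_vec n = ones_vec n \<and> transpose_mat W *\<^sub>v ones_vec n = ones_vec n"

definition pos_def :: "nat \<Rightarrow> real mat \<Rightarrow> bool" where
  "pos_def N P \<longleftrightarrow> P \<in> carrier_mat N N \<and> transpose_mat P = P \<and>
     (\<forall>x \<in> carrier_vec N. x \<noteq> 0\<^sub>v N \<longrightarrow> x \<bullet> (P *\<^sub>v x) > 0)"

definition neg_def :: "nat \<Rightarrow> real mat \<Rightarrow> bool" where
  "neg_def N X \<longleftrightarrow> X \<in> carrier_mat N N \<and> transpose_mat X = X \<and>
     (\<forall>x \<in> carrier_vec N. x \<noteq> 0\<^sub>v N \<longrightarrow> x \<bullet> (X *\<^sub>v x) < 0)"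

fun traj :: "(nat \<Rightarrow> real mat) \<Rightarrow> (nat \<Rightarrow> nat) \<Rightarrow> real vec \<Rightarrow> nat \<Rightarrow> real vec" where
  "traj W \<sigma> x0 0 = x0"
| "traj W \<sigma> x0 (Suc t) = W (\<sigma> t) *\<^sub>v traj W \<sigma> x0 t"

definition consensus_set :: "nat \<Rightarrow> nat \<Rightarrow> (nat \<Rightarrow> real mat) \<Rightarrow> bool" where
  "consensus_set n m W \<longleftrightarrow>
     (\<forall>\<sigma>. (\<forall>t. \<sigma> t \<in> {1..m}) \<longrightarrow>
       (\<forall>x0 \<in> carrier_vec n. \<exists>\<alpha>::real. \<forall>i<n. (\<lambda>t. traj W \<sigma> x0 t $ i) \<longlonglongrightarrow> \<alpha>))"

end

theory Submission
  imports Defs "Jordan_Normal_Form.Determinant"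
begin

(*
  Let a be the average of x(0), which the column-stochastic matrices preserve, and
  e(t) = x(t) - a 1. The disagreement e evolves by the same matrices and stays orthogonal
  to 1, so Q^T Q e = e. Since (A (x) B)(u (x) v) = Au (x) Bv, evaluating the LMI at
  z = (Q e)^(x)r gives V(t+1) - V(t) <= -c |e(t)|^(2r) for the Lyapunov function
  V(t) = (e^(x)r)^T P e^(x)r >= 0, where c > 0 is uniform over the finitely many modes by
  compactness of the unit sphere. Hence |e(t)|^(2r) is summable and x(t) -> a 1.
*)

section \<open>Kronecker powers of vectors\<close>

lemma sum_lessThan_mult_div_mod:
  fixes f :: "nat \<Rightarrow> nat \<Rightarrow> 'a::comm_monoid_add"
  shows "(\<Sum>j<a * b. f (j div b) (j mod b)) = (\<Sum>p<a. \<Sum>q<b. f p q)"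
proof (induction a)
  case 0
  then show ?case by simp
next
  case (Suc a)
  have "(\<Sum>j\<in>{a*b..<a*b+b}. f (j div b) (j mod b)) = (\<Sum>q<b. f ((a*b+q) div b) ((a*b+q) mod b))"
    by (rule sum.reindex_bij_witness[of _ "\<lambda>q. a*b+q" "\<lambda>j. j - a*b"]) auto
  also have "\<dots> = (\<Sum>q<b. f a q)"
    by (rule sum.cong) auto
  finally have block: "(\<Sum>j\<in>{a*b..<a*b+b}. f (j div b) (j mod b)) = (\<Sum>q<b. f a q)" .
  have split: "{..<Suc a * b} = {..<a*b} \<union> {a*b..<a*b+b}"
    by auto
  have "(\<Sum>j<Suc a * b. f (j div b) (j mod b))
      = (\<Sum>j<a * b. f (j div b) (j mod b)) + (\<Sum>j\<in>{a*b..<a*b+b}. f (j div b) (j mod b))"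
    unfolding split by (rule sum.union_disjoint) auto
  then show ?case
    using Suc block by simp
qed

definition vec_kron :: "real vec \<Rightarrow> real vec \<Rightarrow> real vec" where
  "vec_kron u v = vec (dim_vec u * dim_vec v) (\<lambda>i. u $ (i div dim_vec v) * v $ (i mod dim_vec v))"

fun vec_kron_pow :: "real vec \<Rightarrow> nat \<Rightarrow> real vec" where
  "vec_kron_pow x 0 = vec 1 (\<lambda>_. 1)"
| "vec_kron_pow x (Suc r) = vec_kron (vec_kron_pow x r) x"

lemma dim_vec_kron [simp]: "dim_vec (vec_kron u v) = dim_vec u * dim_vec v"
  by (simp add: vec_kron_def)

lemma dim_vec_kron_pow [simp]: "dim_vec (vec_kron_pow x r) = dim_vec x ^ r"
  by (induction r) simp_all

lemma vec_kron_pow_carrier: "x \<in> carrier_vec n \<Longrightarrow> vec_kron_pow x r \<in> carrier_vec (n ^ r)"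
  by (intro carrier_vecI) (simp add: carrier_vecD)

lemma dim_kron [simp]:
  "dim_row (kron A B) = dim_row A * dim_row B"
  "dim_col (kron A B) = dim_col A * dim_col B"
  by (simp_all add: kron_def)

lemma index_kron:
  "i < dim_row A * dim_row B \<Longrightarrow> j < dim_col A * dim_col B \<Longrightarrow>
   kron A B $$ (i, j) = A $$ (i div dim_row B, j div dim_col B) * B $$ (i mod dim_row B, j mod dim_col B)"
  by (simp add: kron_def)

lemma kron_pow_carrier:
  "A \<in> carrier_mat a b \<Longrightarrow> kron_pow A r \<in> carrier_mat (a ^ r) (b ^ r)"
proof (induction r)
  case (Suc r)
  then have "kron (kron_pow A r) A \<in> carrier_mat (a ^ r * a) (b ^ r * b)"
    by (intro carrier_matI) (simp_all add: carrier_matD)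
  then show ?case
    by (simp add: mult.commute)
qed simp

lemma scalar_prod_vec_kron:
  assumes "u \<in> carrier_vec a" "u' \<in> carrier_vec a" "v \<in> carrier_vec b" "v' \<in> carrier_vec b"
  shows "vec_kron u v \<bullet> vec_kron u' v' = (u \<bullet> u') * (v \<bullet> v')"
proof -
  have "vec_kron u v \<bullet> vec_kron u' v'
      = (\<Sum>j<a * b. (u $ (j div b) * u' $ (j div b)) * (v $ (j mod b) * v' $ (j mod b)))"
    using assms unfolding scalar_prod_def vec_kron_def
    by (auto simp: lessThan_atLeast0 intro!: sum.cong)
  also have "\<dots> = (\<Sum>p<a. \<Sum>q<b. (u $ p * u' $ p) * (v $ q * v' $ q))"
    by (rule sum_lessThan_mult_div_mod)
  also have "\<dots> = (u \<bullet> u') * (v \<bullet> v')"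
    using assms unfolding scalar_prod_def by (simp add: sum_product lessThan_atLeast0)
  finally show ?thesis .
qed

lemma scalar_prod_vec_kron_pow_self:
  assumes x: "x \<in> carrier_vec n"
  shows "vec_kron_pow x r \<bullet> vec_kron_pow x r = (x \<bullet> x) ^ r"
proof (induction r)
  case 0
  then show ?case by (simp add: scalar_prod_def)
next
  case (Suc r)
  then show ?case
    using scalar_prod_vec_kron[OF vec_kron_pow_carrier[OF x] vec_kron_pow_carrier[OF x] x x] by simp
qed

lemma kron_mult_vec_kron:
  assumes A: "A \<in> carrier_mat a b" and B: "B \<in> carrier_mat c d"
    and u: "u \<in> carrier_vec b" and v: "v \<in> carrier_vec d"
  shows "kron A B *\<^sub>v vec_kron u v = vec_kron (A *\<^sub>v u) (B *\<^sub>v v)"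
proof (rule eq_vecI)
  fix i
  assume "i < dim_vec (vec_kron (A *\<^sub>v u) (B *\<^sub>v v))"
  then have i: "i < a * c"
    using assms by simp
  then have "c > 0"
    by (cases c) auto
  with i have "i div c < a" "i mod c < c"
    by (auto simp: less_mult_imp_div_less)
  have "(kron A B *\<^sub>v vec_kron u v) $ i
      = (\<Sum>j<b * d. (A $$ (i div c, j div d) * u $ (j div d)) * (B $$ (i mod c, j mod d) * v $ (j mod d)))"
    using assms i unfolding kron_def vec_kron_def row_def
    by (auto simp: lessThan_atLeast0 scalar_prod_def intro!: sum.cong)
  also have "\<dots> = (\<Sum>p<b. \<Sum>q<d. (A $$ (i div c, p) * u $ p) * (B $$ (i mod c, q) * v $ q))"
    by (rule sum_lessThan_mult_div_mod)
  also have "\<dots> = (A *\<^sub>v u) $ (i div c) * (B *\<^sub>v v) $ (i mod c)"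
    using assms \<open>i div c < a\<close> \<open>i mod c < c\<close> unfolding row_def
    by (simp add: scalar_prod_def sum_product lessThan_atLeast0)
  also have "\<dots> = vec_kron (A *\<^sub>v u) (B *\<^sub>v v) $ i"
    using assms i by (simp add: vec_kron_def)
  finally show "(kron A B *\<^sub>v vec_kron u v) $ i = vec_kron (A *\<^sub>v u) (B *\<^sub>v v) $ i" .
qed (use assms in simp)

lemma kron_pow_mult_vec_kron_pow:
  assumes A: "A \<in> carrier_mat a b" and x: "x \<in> carrier_vec b"
  shows "kron_pow A r *\<^sub>v vec_kron_pow x r = vec_kron_pow (A *\<^sub>v x) r"
proof (induction r)
  case 0
  then show ?case by (auto simp: scalar_prod_def)
next
  case (Suc r)
  have "kron_pow A (Suc r) *\<^sub>v vec_kron_pow x (Suc r) = vec_kron (kron_pow A r *\<^sub>v vec_kron_pow x r) (A *\<^sub>v x)"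
    using kron_mult_vec_kron[OF kron_pow_carrier[OF A] A vec_kron_pow_carrier[OF x] x] by simp
  then show ?case
    using Suc by simp
qed

lemma transpose_kron:
  assumes A: "A \<in> carrier_mat a b" and B: "B \<in> carrier_mat c d"
  shows "transpose_mat (kron A B) = kron (transpose_mat A) (transpose_mat B)"
proof (rule eq_matI)
  fix i j
  assume "i < dim_row (kron (transpose_mat A) (transpose_mat B))"
    and "j < dim_col (kron (transpose_mat A) (transpose_mat B))"
  then have i: "i < b * d" and j: "j < a * c"
    using assms by auto
  then have "c > 0" "d > 0"
    by (cases c; cases d; auto)+
  with i j have "i div d < b" "j div c < a" "i mod d < d" "j mod c < c"
    by (auto simp: less_mult_imp_div_less)
  with i j assms have "kron A B $$ (j, i) = kron (transpose_mat A) (transpose_mat B) $$ (i, j)"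
    by (simp add: index_kron)
  then show "transpose_mat (kron A B) $$ (i, j) = kron (transpose_mat A) (transpose_mat B) $$ (i, j)"
    using i j assms by simp
qed (use assms in simp_all)

lemma transpose_kron_pow:
  assumes A: "A \<in> carrier_mat a b"
  shows "transpose_mat (kron_pow A r) = kron_pow (transpose_mat A) r"
proof (induction r)
  case 0
  then show ?case by simp
next
  case (Suc r)
  then show ?case
    using transpose_kron[OF kron_pow_carrier[OF A] A] by simp
qed

section \<open>Negative definite matrices are uniformly negative\<close>

lemma scalar_prod_self_nonneg: "(x :: real vec) \<bullet> x \<ge> 0"
  by (simp add: scalar_prod_def sum_nonneg)

lemma scalar_prod_self_eq_zero:
  assumes x: "(x :: real vec) \<in> carrier_vec N" and zero: "x \<bullet> x = 0"
  shows "x = 0\<^sub>v N"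
proof (rule eq_vecI)
  fix i
  assume i: "i < dim_vec (0\<^sub>v N)"
  have "(\<Sum>j\<in>{0..<N}. x $ j * x $ j) = 0"
    using zero x by (simp add: scalar_prod_def)
  then have "\<forall>j\<in>{0..<N}. x $ j * x $ j = 0"
    by (subst sum_nonneg_eq_0_iff[symmetric]) auto
  then show "x $ i = 0\<^sub>v N $ i"
    using i by simp
qed (use x in simp)

lemma sq_index_le_scalar_prod_self:
  assumes "(x :: real vec) \<in> carrier_vec N" and "i < N"
  shows "(x $ i)\<^sup>2 \<le> x \<bullet> x"
proof -
  have "(x $ i)\<^sup>2 \<le> (\<Sum>j\<in>{0..<N}. (x $ j)\<^sup>2)"
    using assms(2) by (intro member_le_sum) auto
  then show ?thesis
    using assms(1) by (simp add: scalar_prod_def power2_eq_square)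
qed

lemma bounded_seqs_convergent_subseq:
  fixes f :: "nat \<Rightarrow> nat \<Rightarrow> real"
  assumes bounded: "\<And>k i. \<bar>f k i\<bar> \<le> B"
  shows "\<exists>s L. strict_mono s \<and> (\<forall>i<N. (\<lambda>k. f (s k) i) \<longlonglongrightarrow> L i)"
proof (induction N)
  case 0
  then show ?case by (rule exI[of _ id]) (auto simp: strict_mono_def)
next
  case (Suc N)
  then obtain s L where s: "strict_mono s" and L: "\<forall>i<N. (\<lambda>k. f (s k) i) \<longlonglongrightarrow> L i"
    by blast
  obtain s' where s': "strict_mono s'" and mono: "monoseq (\<lambda>k. f (s (s' k)) N)"
    using seq_monosub[of "\<lambda>k. f (s k) N"] by blast
  have "Bseq (\<lambda>k. f (s (s' k)) N)"
    by (rule BseqI'[of _ B]) (use bounded in auto)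
  then obtain l where l: "(\<lambda>k. f (s (s' k)) N) \<longlonglongrightarrow> l"
    using mono Bseq_monoseq_convergent convergent_def by blast
  have "(\<lambda>k. f ((s \<circ> s') k) i) \<longlonglongrightarrow> (L(N := l)) i" if "i < Suc N" for i
  proof (cases "i = N")
    case True
    then show ?thesis using l by simp
  next
    case False
    with that have "i < N"
      by simp
    then have "((\<lambda>k. f (s k) i) \<circ> s') \<longlonglongrightarrow> L i"
      using L s' LIMSEQ_subseq_LIMSEQ by blast
    then show ?thesis
      using False by (simp add: o_def)
  qed
  moreover have "strict_mono (s \<circ> s')"
    using s s' by (simp add: strict_mono_def)
  ultimately show ?case by blast
qed

lemma quadratic_form_tendsto:
  fixes A :: "real mat"
  assumes A: "A \<in> carrier_mat N N" and x: "\<And>k. x k \<in> carrier_vec N" and y: "y \<in> carrier_vec N"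
    and lim: "\<And>i. i < N \<Longrightarrow> (\<lambda>k. x k $ i) \<longlonglongrightarrow> y $ i"
  shows "(\<lambda>k. x k \<bullet> (A *\<^sub>v x k)) \<longlonglongrightarrow> y \<bullet> (A *\<^sub>v y)"
proof -
  have expand: "v \<bullet> (A *\<^sub>v v) = (\<Sum>i<N. \<Sum>j<N. v $ i * A $$ (i, j) * v $ j)" if "v \<in> carrier_vec N" for v
    using A that by (simp add: scalar_prod_def row_def sum_distrib_left lessThan_atLeast0 mult.assoc)
  have "(\<lambda>k. \<Sum>i<N. \<Sum>j<N. x k $ i * A $$ (i, j) * x k $ j) \<longlonglongrightarrow> (\<Sum>i<N. \<Sum>j<N. y $ i * A $$ (i, j) * y $ j)"
    by (intro tendsto_intros lim) auto
  then show ?thesis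
    using x y by (simp add: expand)
qed

lemma unit_vec_convergent_subseq:
  fixes v :: "nat \<Rightarrow> real vec"
  assumes v: "\<And>k. v k \<in> carrier_vec N" and unit: "\<And>k. v k \<bullet> v k = 1"
  shows "\<exists>s L. strict_mono s \<and> L \<in> carrier_vec N \<and> L \<bullet> L = 1
    \<and> (\<forall>i<N. (\<lambda>k. v (s k) $ i) \<longlonglongrightarrow> L $ i)"
proof -
  have "\<bar>if i < N then v k $ i else 0\<bar> \<le> 1" for k i
    using sq_index_le_scalar_prod_self[OF v, of i k] unit[of k] abs_le_square_iff[of "v k $ i" 1] by auto
  then obtain s L where s: "strict_mono s"
    and L: "\<forall>i<N. (\<lambda>k. if i < N then v (s k) $ i else 0) \<longlonglongrightarrow> L i"
    using bounded_seqs_convergent_subseq[of "\<lambda>k i. if i < N then v k $ i else 0" 1 N] by blast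
  have lim: "(\<lambda>k. v (s k) $ i) \<longlonglongrightarrow> vec N L $ i" if "i < N" for i
    using L that by simp
  have "(\<lambda>k. v (s k) \<bullet> (1\<^sub>m N *\<^sub>v v (s k))) \<longlonglongrightarrow> vec N L \<bullet> (1\<^sub>m N *\<^sub>v vec N L)"
    by (rule quadratic_form_tendsto) (use v lim in auto)
  then have "vec N L \<bullet> vec N L = 1"
    using v unit by (simp add: LIMSEQ_const_iff)
  then show ?thesis
    using s lim by (intro exI[of _ s] exI[of _ "vec N L"]) simp
qed

lemma neg_def_unit_bound:
  assumes "neg_def N A"
  shows "\<exists>c>0. \<forall>v\<in>carrier_vec N. v \<bullet> v = 1 \<longrightarrow> v \<bullet> (A *\<^sub>v v) \<le> - c"
proof (rule ccontr)
  have A: "A \<in> carrier_mat N N"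
    and neg: "\<And>x. x \<in> carrier_vec N \<Longrightarrow> x \<noteq> 0\<^sub>v N \<Longrightarrow> x \<bullet> (A *\<^sub>v x) < 0"
    using assms by (auto simp: neg_def_def)
  assume "\<not> ?thesis"
  then have no_bound: "\<exists>v. v \<in> carrier_vec N \<and> v \<bullet> v = 1 \<and> v \<bullet> (A *\<^sub>v v) > - c" if "c > 0" for c
    using that by (auto simp: not_le)
  have "\<forall>k. \<exists>v. v \<in> carrier_vec N \<and> v \<bullet> v = 1 \<and> v \<bullet> (A *\<^sub>v v) > - (1 / (real k + 1))"
    using no_bound by simp
  from choice[OF this] obtain v where v: "\<And>k. v k \<in> carrier_vec N" "\<And>k. v k \<bullet> v k = 1"
    and almost: "\<And>k. v k \<bullet> (A *\<^sub>v v k) > - (1 / (real k + 1))"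
    by blast
  obtain s L where s: "strict_mono s" and L: "L \<in> carrier_vec N" "L \<bullet> L = 1"
    and lim: "\<And>i. i < N \<Longrightarrow> (\<lambda>k. v (s k) $ i) \<longlonglongrightarrow> L $ i"
    using unit_vec_convergent_subseq[where v = v, OF v] by blast
  have lim_quad: "(\<lambda>k. v (s k) \<bullet> (A *\<^sub>v v (s k))) \<longlonglongrightarrow> L \<bullet> (A *\<^sub>v L)"
    by (rule quadratic_form_tendsto[OF A _ L(1) lim]) (rule v)
  have "(\<lambda>k. 1 / (real k + 1)) \<longlonglongrightarrow> 0"
    using LIMSEQ_inverse_real_of_nat by (simp add: inverse_eq_divide add.commute)
  then have "((\<lambda>k. 1 / (real k + 1)) \<circ> s) \<longlonglongrightarrow> 0"
    using s LIMSEQ_subseq_LIMSEQ by blast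
  then have lim_eps: "(\<lambda>k. - (1 / (real (s k) + 1))) \<longlonglongrightarrow> - 0"
    unfolding o_def by (rule tendsto_minus)
  have "- 0 \<le> L \<bullet> (A *\<^sub>v L)"
    using lim_eps lim_quad by (rule LIMSEQ_le) (use less_imp_le[OF almost] in blast)
  moreover have "L \<noteq> 0\<^sub>v N"
  proof
    assume "L = 0\<^sub>v N"
    with L(2) show False by simp
  qed
  ultimately show False
    using neg[OF L(1)] by simp
qed

lemma neg_def_quadratic_bound:
  assumes "neg_def N A"
  shows "\<exists>c>0. \<forall>x\<in>carrier_vec N. x \<bullet> (A *\<^sub>v x) \<le> - c * (x \<bullet> x)"
proof -
  obtain c where c: "c > 0"
    and unit: "\<And>v. v \<in> carrier_vec N \<Longrightarrow> v \<bullet> v = 1 \<Longrightarrow> v \<bullet> (A *\<^sub>v v) \<le> - c"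
    using neg_def_unit_bound[OF assms] by blast
  have A: "A \<in> carrier_mat N N"
    using assms by (simp add: neg_def_def)
  have "x \<bullet> (A *\<^sub>v x) \<le> - c * (x \<bullet> x)" if x: "x \<in> carrier_vec N" for x
  proof (cases "x = 0\<^sub>v N")
    case True
    then show ?thesis using A by simp
  next
    case False
    then have pos: "x \<bullet> x > 0"
      using scalar_prod_self_eq_zero[OF x] scalar_prod_self_nonneg[of x] by fastforce
    define a where "a = 1 / sqrt (x \<bullet> x)"
    have aa: "a * a = 1 / (x \<bullet> x)"
      using pos by (simp add: a_def divide_simps)
    have "(a \<cdot>\<^sub>v x) \<bullet> (a \<cdot>\<^sub>v x) = 1" and "(a \<cdot>\<^sub>v x) \<bullet> (A *\<^sub>v (a \<cdot>\<^sub>v x)) = (x \<bullet> (A *\<^sub>v x)) / (x \<bullet> x)"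
      using x A pos by (simp_all add: mult_mat_vec mult.assoc[symmetric] aa)
    then have "(x \<bullet> (A *\<^sub>v x)) / (x \<bullet> x) \<le> - c"
      using unit[of "a \<cdot>\<^sub>v x"] x by simp
    then show ?thesis
      using pos by (simp add: pos_divide_le_eq)
  qed
  then show ?thesis
    using c by blast
qed

lemma neg_def_family_quadratic_bound:
  assumes "finite I" and "\<And>i. i \<in> I \<Longrightarrow> neg_def N (A i)"
  shows "\<exists>c>0. \<forall>i\<in>I. \<forall>x\<in>carrier_vec N. x \<bullet> (A i *\<^sub>v x) \<le> - c * (x \<bullet> x)"
  using assms
proof (induction I rule: finite_induct)
  case empty
  show ?case by (intro exI[of _ 1]) simp
next
  case (insert i I)
  then obtain c where c: "c > 0" "\<forall>j\<in>I. \<forall>x\<in>carrier_vec N. x \<bullet> (A j *\<^sub>v x) \<le> - c * (x \<bullet> x)"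
    by auto
  obtain d where d: "d > 0" "\<forall>x\<in>carrier_vec N. x \<bullet> (A i *\<^sub>v x) \<le> - d * (x \<bullet> x)"
    using neg_def_quadratic_bound insert.prems by blast
  have "- c * (x \<bullet> x) \<le> - min c d * (x \<bullet> x)" "- d * (x \<bullet> x) \<le> - min c d * (x \<bullet> x)" for x :: "real vec"
    using scalar_prod_self_nonneg[of x] by (simp_all add: mult_right_mono)
  then show ?case
    using c d by (intro exI[of _ "min c d"]) (fastforce intro: order_trans)
qed

section \<open>An orthonormal basis of the disagreement space\<close>

lemma orthonormal_complement_right_inverse:
  assumes n: "n > 0" and Q: "Q \<in> carrier_mat (n - 1) n"
    and QQ: "Q * transpose_mat Q = 1\<^sub>m (n - 1)" and Q1: "Q *\<^sub>v ones_vec n = 0\<^sub>v (n - 1)"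
  defines "R \<equiv> mat n n (\<lambda>(a, b). if a < n - 1 then Q $$ (a, b) else 1)"
    and "S \<equiv> mat n n (\<lambda>(a, b). if b < n - 1 then Q $$ (b, a) else 1 / real n)"
  shows "R * S = 1\<^sub>m n"
proof (rule eq_matI)
  have rows: "(\<Sum>k=0..<n. Q $$ (a, k) * Q $$ (b, k)) = (if a = b then 1 else 0)"
    if "a < n - 1" "b < n - 1" for a b
  proof -
    have "(Q * transpose_mat Q) $$ (a, b) = (\<Sum>k=0..<n. Q $$ (a, k) * Q $$ (b, k))"
      using Q that by (simp add: scalar_prod_def)
    then show ?thesis
      using QQ that by simp
  qed
  have row_sums: "(\<Sum>k=0..<n. Q $$ (a, k)) = 0" if "a < n - 1" for a
  proof -
    have "(Q *\<^sub>v ones_vec n) $ a = (\<Sum>k=0..<n. Q $$ (a, k))"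
      using Q that by (simp add: scalar_prod_def ones_vec_def)
    then show ?thesis
      using Q1 that by simp
  qed
  fix a b
  assume "a < dim_row (1\<^sub>m n :: real mat)" "b < dim_col (1\<^sub>m n :: real mat)"
  then have a: "a < n" and b: "b < n"
    by auto
  have entry: "(R * S) $$ (a, b) = (\<Sum>k=0..<n. (if a < n - 1 then Q $$ (a, k) else 1)
      * (if b < n - 1 then Q $$ (b, k) else 1 / real n))"
    using a b by (simp add: R_def S_def scalar_prod_def)
  consider "a < n - 1" "b < n - 1" | "a < n - 1" "b = n - 1" | "a = n - 1" "b < n - 1" | "a = n - 1" "b = n - 1"
    using a b by linarith
  then show "(R * S) $$ (a, b) = 1\<^sub>m n $$ (a, b)"
  proof cases
    case 1
    then show ?thesis
      using entry rows a b by simp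
  next
    case 2
    then have "(R * S) $$ (a, b) = (\<Sum>k=0..<n. Q $$ (a, k)) / real n"
      using entry by (simp add: sum_divide_distrib)
    then show ?thesis
      using 2 row_sums a b by simp
  next
    case 3
    then show ?thesis
      using entry row_sums a b by simp
  next
    case 4
    then show ?thesis
      using entry n a b by simp
  qed
qed (simp_all add: R_def S_def)

lemma transpose_mult_orthonormal_complement:
  assumes n: "n > 0" and Q: "Q \<in> carrier_mat (n - 1) n"
    and QQ: "Q * transpose_mat Q = 1\<^sub>m (n - 1)" and Q1: "Q *\<^sub>v ones_vec n = 0\<^sub>v (n - 1)"
    and i: "i < n" and j: "j < n"
  shows "(transpose_mat Q * Q) $$ (i, j) = (if i = j then 1 else 0) - 1 / real n"
proof -
  (* R stacks the rows of Q on top of 1^T, and S R = Q^T Q + J/n; since R S = 1, also S R = 1. *)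
  define R S where "R = mat n n (\<lambda>(a, b). if a < n - 1 then Q $$ (a, b) else 1)"
    and "S = mat n n (\<lambda>(a, b). if b < n - 1 then Q $$ (b, a) else 1 / real n)"
  have "S * R = 1\<^sub>m n"
    by (rule mat_mult_left_right_inverse[of R n S])
      (use orthonormal_complement_right_inverse[OF n Q QQ Q1] in \<open>simp_all add: R_def S_def\<close>)
  have "(S * R) $$ (i, j) = (\<Sum>k=0..<n. (if k < n - 1 then Q $$ (k, i) else 1 / real n)
      * (if k < n - 1 then Q $$ (k, j) else 1))"
    using i j by (simp add: R_def S_def scalar_prod_def)
  also have "\<dots> = (\<Sum>k=0..<n - 1. Q $$ (k, i) * Q $$ (k, j)) + 1 / real n"
  proof -
    have "n = Suc (n - 1)"
      using n by simp
    then have "(\<Sum>k=0..<n. (if k < n - 1 then Q $$ (k, i) else 1 / real n) * (if k < n - 1 then Q $$ (k, j) else 1))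
        = (\<Sum>k=0..<Suc (n - 1). (if k < n - 1 then Q $$ (k, i) else 1 / real n) * (if k < n - 1 then Q $$ (k, j) else 1))"
      by simp
    also have "\<dots> = (\<Sum>k=0..<n - 1. (if k < n - 1 then Q $$ (k, i) else 1 / real n) * (if k < n - 1 then Q $$ (k, j) else 1))
          + 1 / real n"
      by (simp only: sum.atLeast0_lessThan_Suc) simp
    also have "(\<Sum>k=0..<n - 1. (if k < n - 1 then Q $$ (k, i) else 1 / real n) * (if k < n - 1 then Q $$ (k, j) else 1))
        = (\<Sum>k=0..<n - 1. Q $$ (k, i) * Q $$ (k, j))"
      by (rule sum.cong) auto
    finally show ?thesis .
  qed
  also have "(\<Sum>k=0..<n - 1. Q $$ (k, i) * Q $$ (k, j)) = (transpose_mat Q * Q) $$ (i, j)"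
    using Q i j by (simp add: scalar_prod_def)
  finally show ?thesis
    using \<open>S * R = 1\<^sub>m n\<close> i j by simp
qed

lemma transpose_mult_orthonormal_complement_vec:
  assumes n: "n > 0" and Q: "Q \<in> carrier_mat (n - 1) n"
    and QQ: "Q * transpose_mat Q = 1\<^sub>m (n - 1)" and Q1: "Q *\<^sub>v ones_vec n = 0\<^sub>v (n - 1)"
    and e: "e \<in> carrier_vec n" and e_sum: "ones_vec n \<bullet> e = 0"
  shows "transpose_mat Q *\<^sub>v (Q *\<^sub>v e) = e"
proof (rule eq_vecI)
  fix i
  assume "i < dim_vec e"
  then have i: "i < n"
    using e by simp
  have entry: "(M *\<^sub>v e) $ i = (\<Sum>j=0..<n. M $$ (i, j) * e $ j)" if "M \<in> carrier_mat n n" for M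
    using that e i by (simp add: scalar_prod_def)
  have "(transpose_mat Q *\<^sub>v (Q *\<^sub>v e)) $ i = ((transpose_mat Q * Q) *\<^sub>v e) $ i"
    using Q e by simp
  also have "\<dots> = (\<Sum>j=0..<n. (transpose_mat Q * Q) $$ (i, j) * e $ j)"
    using Q by (intro entry) simp
  also have "\<dots> = (\<Sum>j=0..<n. (if j = i then e $ j else 0) - e $ j / real n)"
  proof (rule sum.cong[OF refl])
    fix j
    assume "j \<in> {0..<n}"
    then show "(transpose_mat Q * Q) $$ (i, j) * e $ j = (if j = i then e $ j else 0) - e $ j / real n"
      using transpose_mult_orthonormal_complement[OF n Q QQ Q1 i, of j]
      by (cases "j = i") (auto simp: left_diff_distrib)
  qed
  also have "\<dots> = e $ i - (\<Sum>j=0..<n. e $ j) / real n"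
    using i by (simp add: sum_subtractf sum_divide_distrib)
  also have "(\<Sum>j=0..<n. e $ j) = 0"
    using e_sum e by (simp add: scalar_prod_def ones_vec_def)
  finally show "(transpose_mat Q *\<^sub>v (Q *\<^sub>v e)) $ i = e $ i"
    by simp
qed (use Q e in simp)

section \<open>The Kronecker Lyapunov function\<close>

lemma quadratic_form_congruence:
  fixes C :: "real mat"
  assumes C: "C \<in> carrier_mat a b" and P: "P \<in> carrier_mat b b" and z: "z \<in> carrier_vec a"
  shows "z \<bullet> ((C * P * transpose_mat C) *\<^sub>v z) = (transpose_mat C *\<^sub>v z) \<bullet> (P *\<^sub>v (transpose_mat C *\<^sub>v z))"
proof -
  have CP: "C * P \<in> carrier_mat a b" and CT: "transpose_mat C \<in> carrier_mat b a"
    using C P by simp_all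
  have "(C * P * transpose_mat C) *\<^sub>v z = (C * P) *\<^sub>v (transpose_mat C *\<^sub>v z)"
    by (rule assoc_mult_mat_vec[OF CP CT z])
  also have "\<dots> = C *\<^sub>v (P *\<^sub>v (transpose_mat C *\<^sub>v z))"
    by (rule assoc_mult_mat_vec[OF C P]) (use CT z in simp)
  finally show ?thesis
    using transpose_vec_mult_scalar[OF C _ z, of "P *\<^sub>v (transpose_mat C *\<^sub>v z)"] C P z by simp
qed

lemma quadratic_form_sandwich:
  fixes A :: "real mat"
  assumes A: "A \<in> carrier_mat a b" and B: "B \<in> carrier_mat b b" and P: "P \<in> carrier_mat b b"
    and z: "z \<in> carrier_vec a"
  shows "z \<bullet> ((A * transpose_mat B * P * B * transpose_mat A) *\<^sub>v z)
    = (B *\<^sub>v (transpose_mat A *\<^sub>v z)) \<bullet> (P *\<^sub>v (B *\<^sub>v (transpose_mat A *\<^sub>v z)))"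
proof -
  define C where "C = A * transpose_mat B"
  have C: "C \<in> carrier_mat a b" and CP: "C * P \<in> carrier_mat a b"
    and AT: "transpose_mat A \<in> carrier_mat b a"
    using A B P by (simp_all add: C_def)
  have CT: "transpose_mat C = B * transpose_mat A"
    using transpose_mult[OF A, of "transpose_mat B"] B by (simp add: C_def)
  have "C * P * transpose_mat C = C * P * B * transpose_mat A"
    unfolding CT by (rule assoc_mult_mat[OF CP B AT, symmetric])
  then have "A * transpose_mat B * P * B * transpose_mat A = C * P * transpose_mat C"
    unfolding C_def by (rule sym)
  moreover have "transpose_mat C *\<^sub>v z = B *\<^sub>v (transpose_mat A *\<^sub>v z)"
    unfolding CT by (rule assoc_mult_mat_vec[OF B AT z])
  ultimately show ?thesis
    using quadratic_form_congruence[OF C P z] by simp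
qed

definition kron_lmi :: "real mat \<Rightarrow> real mat \<Rightarrow> nat \<Rightarrow> real mat \<Rightarrow> real mat" where
  "kron_lmi Q P r W =
     kron_pow Q r * transpose_mat (kron_pow W r) * P * kron_pow W r * transpose_mat (kron_pow Q r)
     - kron_pow Q r * P * transpose_mat (kron_pow Q r)"

lemma kron_lmi_quadratic_form:
  assumes Q: "Q \<in> carrier_mat k n" and W: "W \<in> carrier_mat n n" and P: "P \<in> carrier_mat (n ^ r) (n ^ r)"
    and e: "e \<in> carrier_vec n" and proj: "transpose_mat Q *\<^sub>v (Q *\<^sub>v e) = e"
  shows "vec_kron_pow (Q *\<^sub>v e) r \<bullet> (kron_lmi Q P r W *\<^sub>v vec_kron_pow (Q *\<^sub>v e) r)
    = vec_kron_pow (W *\<^sub>v e) r \<bullet> (P *\<^sub>v vec_kron_pow (W *\<^sub>v e) r) - vec_kron_pow e r \<bullet> (P *\<^sub>v vec_kron_pow e r)"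
proof -
  define Qr Wr z u where "Qr = kron_pow Q r" and "Wr = kron_pow W r"
    and "z = vec_kron_pow (Q *\<^sub>v e) r" and "u = vec_kron_pow e r"
  have Qr: "Qr \<in> carrier_mat (k ^ r) (n ^ r)"
    unfolding Qr_def by (rule kron_pow_carrier[OF Q])
  have Wr: "Wr \<in> carrier_mat (n ^ r) (n ^ r)"
    unfolding Wr_def by (rule kron_pow_carrier[OF W])
  have Qe: "Q *\<^sub>v e \<in> carrier_vec k"
    using Q e by simp
  have z: "z \<in> carrier_vec (k ^ r)"
    unfolding z_def by (rule vec_kron_pow_carrier[OF Qe])
  have QT: "transpose_mat Q \<in> carrier_mat n k"
    using Q by simp
  have u: "transpose_mat Qr *\<^sub>v z = u"
    unfolding Qr_def z_def u_def transpose_kron_pow[OF Q] kron_pow_mult_vec_kron_pow[OF QT Qe] proj ..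
  have Wu: "Wr *\<^sub>v u = vec_kron_pow (W *\<^sub>v e) r"
    unfolding Wr_def u_def by (rule kron_pow_mult_vec_kron_pow[OF W e])
  have QrT: "transpose_mat Qr \<in> carrier_mat (n ^ r) (k ^ r)" and WrT: "transpose_mat Wr \<in> carrier_mat (n ^ r) (n ^ r)"
    using Qr Wr by simp_all
  have M1: "Qr * transpose_mat Wr * P * Wr * transpose_mat Qr \<in> carrier_mat (k ^ r) (k ^ r)"
    by (rule mult_carrier_mat[OF mult_carrier_mat[OF mult_carrier_mat[OF mult_carrier_mat[OF Qr WrT] P] Wr] QrT])
  have M2: "Qr * P * transpose_mat Qr \<in> carrier_mat (k ^ r) (k ^ r)"
    by (rule mult_carrier_mat[OF mult_carrier_mat[OF Qr P] QrT])
  have "z \<bullet> (kron_lmi Q P r W *\<^sub>v z)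
      = z \<bullet> ((Qr * transpose_mat Wr * P * Wr * transpose_mat Qr) *\<^sub>v z) - z \<bullet> ((Qr * P * transpose_mat Qr) *\<^sub>v z)"
    unfolding kron_lmi_def Qr_def[symmetric] Wr_def[symmetric] minus_mult_distrib_mat_vec[OF M1 M2 z]
    by (rule scalar_prod_minus_distrib[OF z]) (use M1 M2 z in simp_all)
  also have "\<dots> = vec_kron_pow (W *\<^sub>v e) r \<bullet> (P *\<^sub>v vec_kron_pow (W *\<^sub>v e) r) - u \<bullet> (P *\<^sub>v u)"
    using quadratic_form_sandwich[OF Qr Wr P z] quadratic_form_congruence[OF Qr P z] by (simp add: u Wu)
  finally show ?thesis
    unfolding z_def u_def .
qed

lemma pos_def_quadratic_form_nonneg:
  assumes P: "pos_def N P" and u: "u \<in> carrier_vec N"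
  shows "u \<bullet> (P *\<^sub>v u) \<ge> 0"
  using assms by (cases "u = 0\<^sub>v N") (auto simp: pos_def_def intro: less_imp_le)

lemma lyapunov_decrease_tendsto_zero:
  fixes V f :: "nat \<Rightarrow> real"
  assumes V: "\<And>t. 0 \<le> V t" and f: "\<And>t. 0 \<le> f t" and c: "c > 0"
    and decrease: "\<And>t. V (Suc t) \<le> V t - c * f t"
  shows "f \<longlonglongrightarrow> 0"
proof -
  have partial: "(\<Sum>t<T. c * f t) \<le> V 0 - V T" for T
  proof (induction T)
    case (Suc T)
    then show ?case
      using decrease[of T] by simp
  qed simp
  have "summable (\<lambda>t. c * f t)"
  proof (rule summableI_nonneg_bounded[where x = "V 0"])
    show "0 \<le> c * f t" for t
      using c f[of t] by simp
    show "(\<Sum>t<T. c * f t) \<le> V 0" for T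
      using partial[of T] V[of T] by linarith
  qed
  then have "(\<lambda>t. c * f t) \<longlonglongrightarrow> 0"
    by (rule summable_LIMSEQ_zero)
  then have "(\<lambda>t. c * f t / c) \<longlonglongrightarrow> 0 / c"
    by (rule tendsto_divide) (use c in auto)
  then show ?thesis
    using c by simp
qed

lemma vec_index_tendsto_zero:
  fixes e :: "nat \<Rightarrow> real vec"
  assumes e: "\<And>t. e t \<in> carrier_vec n" and lim: "(\<lambda>t. e t \<bullet> e t) \<longlonglongrightarrow> 0" and i: "i < n"
  shows "(\<lambda>t. e t $ i) \<longlonglongrightarrow> 0"
proof -
  have "(\<lambda>t. (e t $ i)\<^sup>2) \<longlonglongrightarrow> 0"
    by (rule tendsto_sandwich[OF _ _ tendsto_const lim]) (use sq_index_le_scalar_prod_self[OF e i] in auto)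
  then have "(\<lambda>t. sqrt ((e t $ i)\<^sup>2)) \<longlonglongrightarrow> sqrt 0"
    by (rule tendsto_real_sqrt)
  then show ?thesis
    by (simp add: tendsto_rabs_zero_iff)
qed

lemma switched_kron_lmi_tendsto_zero:
  assumes Q: "Q \<in> carrier_mat k n" and P: "pos_def (n ^ r) P" and r: "r \<ge> 1" and c: "c > 0"
    and W: "\<And>t. W t \<in> carrier_mat n n"
    and LMI: "\<And>t z. z \<in> carrier_vec (k ^ r) \<Longrightarrow> z \<bullet> (kron_lmi Q P r (W t) *\<^sub>v z) \<le> - c * (z \<bullet> z)"
    and e: "\<And>t. e t \<in> carrier_vec n" and step: "\<And>t. e (Suc t) = W t *\<^sub>v e t"
    and proj: "\<And>t. transpose_mat Q *\<^sub>v (Q *\<^sub>v e t) = e t"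
  shows "(\<lambda>t. e t \<bullet> e t) \<longlonglongrightarrow> 0"
proof -
  have Pc: "P \<in> carrier_mat (n ^ r) (n ^ r)"
    using P by (simp add: pos_def_def)
  define V where "V t = vec_kron_pow (e t) r \<bullet> (P *\<^sub>v vec_kron_pow (e t) r)" for t
  have decrease: "V (Suc t) \<le> V t - c * (e t \<bullet> e t) ^ r" for t
  proof -
    have Qe: "Q *\<^sub>v e t \<in> carrier_vec k"
      using Q e[of t] by simp
    have "(Q *\<^sub>v e t) \<bullet> (Q *\<^sub>v e t) = e t \<bullet> e t"
      using transpose_vec_mult_scalar[OF Q e Qe] proj[of t] by simp
    then have "vec_kron_pow (Q *\<^sub>v e t) r \<bullet> vec_kron_pow (Q *\<^sub>v e t) r = (e t \<bullet> e t) ^ r"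
      using scalar_prod_vec_kron_pow_self[OF Qe] by simp
    moreover have "vec_kron_pow (Q *\<^sub>v e t) r \<bullet> (kron_lmi Q P r (W t) *\<^sub>v vec_kron_pow (Q *\<^sub>v e t) r)
        = V (Suc t) - V t"
      using kron_lmi_quadratic_form[OF Q W Pc e proj] by (simp add: V_def step)
    ultimately show ?thesis
      using LMI[OF vec_kron_pow_carrier[OF Qe], of t] by simp
  qed
  have "(\<lambda>t. (e t \<bullet> e t) ^ r) \<longlonglongrightarrow> 0"
  proof (rule lyapunov_decrease_tendsto_zero[where V = V and c = c])
    show "0 \<le> V t" for t
      unfolding V_def by (rule pos_def_quadratic_form_nonneg[OF P vec_kron_pow_carrier[OF e]])
    show "0 \<le> (e t \<bullet> e t) ^ r" for t
      using scalar_prod_self_nonneg by simp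
  qed (use c decrease in auto)
  then have "(\<lambda>t. root r ((e t \<bullet> e t) ^ r)) \<longlonglongrightarrow> root r 0"
    by (rule tendsto_real_root)
  moreover have "root r ((e t \<bullet> e t) ^ r) = e t \<bullet> e t" for t
    using r scalar_prod_self_nonneg[of "e t"] by (simp add: real_root_power_cancel)
  ultimately show ?thesis
    by simp
qed

section \<open>Consensus dynamics\<close>

lemma traj_carrier:
  assumes "\<And>t. W (\<sigma> t) \<in> carrier_mat n n" and "x0 \<in> carrier_vec n"
  shows "traj W \<sigma> x0 t \<in> carrier_vec n"
proof (induction t)
  case (Suc t)
  then show ?case
    using assms(1)[of t] by simp
qed (use assms in simp)

lemma ones_scalar_prod_traj:
  assumes W: "\<And>t. W (\<sigma> t) \<in> carrier_mat n n"
    and WT1: "\<And>t. transpose_mat (W (\<sigma> t)) *\<^sub>v ones_vec n = ones_vec n"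
    and x0: "x0 \<in> carrier_vec n"
  shows "ones_vec n \<bullet> traj W \<sigma> x0 t = ones_vec n \<bullet> x0"
proof (induction t)
  case (Suc t)
  have "ones_vec n \<in> carrier_vec n"
    by (simp add: ones_vec_def)
  then have "ones_vec n \<bullet> traj W \<sigma> x0 (Suc t) = (transpose_mat (W (\<sigma> t)) *\<^sub>v ones_vec n) \<bullet> traj W \<sigma> x0 t"
    using transpose_vec_mult_scalar[OF W traj_carrier[where W = W and \<sigma> = \<sigma>, OF W x0]] by simp
  then show ?case
    using Suc WT1 by simp
qed simp

lemma traj_disagreement:
  assumes n: "n > 0" and x0: "x0 \<in> carrier_vec n"
    and W: "\<And>t. W (\<sigma> t) \<in> carrier_mat n n"
    and W1: "\<And>t. W (\<sigma> t) *\<^sub>v ones_vec n = ones_vec n"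
    and WT1: "\<And>t. transpose_mat (W (\<sigma> t)) *\<^sub>v ones_vec n = ones_vec n"
    and \<alpha>: "\<alpha> = (ones_vec n \<bullet> x0) / real n"
  shows "traj W \<sigma> x0 t - \<alpha> \<cdot>\<^sub>v ones_vec n \<in> carrier_vec n"
    and "traj W \<sigma> x0 (Suc t) - \<alpha> \<cdot>\<^sub>v ones_vec n = W (\<sigma> t) *\<^sub>v (traj W \<sigma> x0 t - \<alpha> \<cdot>\<^sub>v ones_vec n)"
    and "ones_vec n \<bullet> (traj W \<sigma> x0 t - \<alpha> \<cdot>\<^sub>v ones_vec n) = 0"
proof -
  have ones: "ones_vec n \<in> carrier_vec n"
    by (simp add: ones_vec_def)
  have x: "traj W \<sigma> x0 t \<in> carrier_vec n"
    by (rule traj_carrier[where W = W and \<sigma> = \<sigma>, OF W x0])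
  show "traj W \<sigma> x0 t - \<alpha> \<cdot>\<^sub>v ones_vec n \<in> carrier_vec n"
    using x ones by simp
  show "traj W \<sigma> x0 (Suc t) - \<alpha> \<cdot>\<^sub>v ones_vec n = W (\<sigma> t) *\<^sub>v (traj W \<sigma> x0 t - \<alpha> \<cdot>\<^sub>v ones_vec n)"
    using x ones W1[of t] by (simp add: mult_minus_distrib_mat_vec[OF W] mult_mat_vec[OF W])
  have "ones_vec n \<bullet> ones_vec n = real n"
    by (simp add: ones_vec_def scalar_prod_def)
  then show "ones_vec n \<bullet> (traj W \<sigma> x0 t - \<alpha> \<cdot>\<^sub>v ones_vec n) = 0"
    using ones_scalar_prod_traj[where W = W and \<sigma> = \<sigma>, OF W WT1 x0, of t] x ones n \<alpha> by (simp add: scalar_prod_minus_distrib)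
qed

lemma traj_tendsto_average:
  assumes n: "n > 0" and Q: "Q \<in> carrier_mat (n - 1) n"
    and QQ: "Q * transpose_mat Q = 1\<^sub>m (n - 1)" and Q1: "Q *\<^sub>v ones_vec n = 0\<^sub>v (n - 1)"
    and P: "pos_def (n ^ r) P" and r: "r \<ge> 1" and c: "c > 0" and x0: "x0 \<in> carrier_vec n"
    and W: "\<And>t. W (\<sigma> t) \<in> carrier_mat n n"
    and W1: "\<And>t. W (\<sigma> t) *\<^sub>v ones_vec n = ones_vec n"
    and WT1: "\<And>t. transpose_mat (W (\<sigma> t)) *\<^sub>v ones_vec n = ones_vec n"
    and LMI: "\<And>t z. z \<in> carrier_vec ((n - 1) ^ r) \<Longrightarrow> z \<bullet> (kron_lmi Q P r (W (\<sigma> t)) *\<^sub>v z) \<le> - c * (z \<bullet> z)"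
    and i: "i < n"
  shows "(\<lambda>t. traj W \<sigma> x0 t $ i) \<longlonglongrightarrow> (ones_vec n \<bullet> x0) / real n"
proof -
  define \<alpha> where "\<alpha> = (ones_vec n \<bullet> x0) / real n"
  define e where "e t = traj W \<sigma> x0 t - \<alpha> \<cdot>\<^sub>v ones_vec n" for t
  note e = traj_disagreement[where W = W and \<sigma> = \<sigma>, OF n x0 W W1 WT1 \<alpha>_def, folded e_def]
  have "(\<lambda>t. e t \<bullet> e t) \<longlonglongrightarrow> 0"
  proof (rule switched_kron_lmi_tendsto_zero[where W = "\<lambda>t. W (\<sigma> t)", OF Q P r c W LMI e(1,2)])
    show "transpose_mat Q *\<^sub>v (Q *\<^sub>v e t) = e t" for t
      by (rule transpose_mult_orthonormal_complement_vec[OF n Q QQ Q1 e(1,3)])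
  qed
  then have "(\<lambda>t. e t $ i + \<alpha>) \<longlonglongrightarrow> 0 + \<alpha>"
    by (intro tendsto_add tendsto_const vec_index_tendsto_zero[OF e(1) _ i])
  moreover have "e t $ i + \<alpha> = traj W \<sigma> x0 t $ i" for t
    using i traj_carrier[where W = W and \<sigma> = \<sigma>, OF W x0, of t] by (simp add: e_def ones_vec_def)
  ultimately show ?thesis
    by (simp add: \<alpha>_def)
qed

theorem corollary7:
  fixes n m r :: nat and W :: "nat \<Rightarrow> real mat" and Q P :: "real mat"
  assumes W: "\<forall>k\<in>{1..m}. eventually_doubly_stochastic n (W k)"
    and Q: "Q \<in> carrier_mat (n - 1) n"
    and QQ: "Q * transpose_mat Q = 1\<^sub>m (n - 1)"
    and Q1: "Q *\<^sub>v ones_vec n = 0\<^sub>v (n - 1)"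
    and r: "r \<ge> 1"
    and P: "pos_def (n ^ r) P"
    and LMI: "\<forall>k\<in>{1..m}. neg_def ((n - 1) ^ r)
       (kron_pow Q r * transpose_mat (kron_pow (W k) r) * P * kron_pow (W k) r * transpose_mat (kron_pow Q r)
        - kron_pow Q r * P * transpose_mat (kron_pow Q r))"
  shows "consensus_set n m W"
proof (cases "n = 0")
  case True
  then show ?thesis
    by (simp add: consensus_set_def)
next
  case False
  then have n: "n > 0"
    by simp
  have "\<exists>c>0. \<forall>k\<in>{1..m}. \<forall>z\<in>carrier_vec ((n - 1) ^ r). z \<bullet> (kron_lmi Q P r (W k) *\<^sub>v z) \<le> - c * (z \<bullet> z)"
    by (rule neg_def_family_quadratic_bound) (use LMI in \<open>auto simp: kron_lmi_def\<close>)
  then obtain c where c: "c > 0"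
    and bound: "\<forall>k\<in>{1..m}. \<forall>z\<in>carrier_vec ((n - 1) ^ r). z \<bullet> (kron_lmi Q P r (W k) *\<^sub>v z) \<le> - c * (z \<bullet> z)"
    by blast
  show ?thesis
    unfolding consensus_set_def
  proof (intro allI impI ballI)
    fix \<sigma> :: "nat \<Rightarrow> nat" and x0 :: "real vec"
    assume \<sigma>: "\<forall>t. \<sigma> t \<in> {1..m}" and x0: "x0 \<in> carrier_vec n"
    have "eventually_doubly_stochastic n (W (\<sigma> t))" for t
      using W \<sigma> by blast
    then have Wc: "W (\<sigma> t) \<in> carrier_mat n n" and W1: "W (\<sigma> t) *\<^sub>v ones_vec n = ones_vec n"
      and WT1: "transpose_mat (W (\<sigma> t)) *\<^sub>v ones_vec n = ones_vec n" for t
      by (simp_all add: eventually_doubly_stochastic_def eventually_positive_def)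
    have LMI\<sigma>: "z \<bullet> (kron_lmi Q P r (W (\<sigma> t)) *\<^sub>v z) \<le> - c * (z \<bullet> z)"
      if "z \<in> carrier_vec ((n - 1) ^ r)" for t z
      using bound \<sigma> that by blast
    show "\<exists>\<alpha>. \<forall>i<n. (\<lambda>t. traj W \<sigma> x0 t $ i) \<longlonglongrightarrow> \<alpha>"
      using traj_tendsto_average[where W = W and \<sigma> = \<sigma>, OF n Q QQ Q1 P r c x0 Wc W1 WT1 LMI\<sigma>] by blast
  qed
qed

end
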